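(* Let $E$ be a dense linear subspace of $\omega$ of countably infinite Hamel dimension. Then there exist a Hamel basis $\{v_n\}_{n\in\mathbb{N}}$ of $E$ and a bijection $\alpha:\mathbb{N}\to\mathbb{N}$ such that $\delta_{\alpha(n)}(v_n)=1$ for all $n\in\mathbb{N}$ and $\delta_{\alpha(k)}(v_n)=0$ whenever $n\in\mathbb{N}$ and $k<n$.
   Context: $\omega=\mathbb{K}^{\mathbb{N}}$ with the product topology, $\mathbb{K}\in\{\mathbb{R},\mathbb{C}\}$; $\delta_n$ denotes the $n$-th coordinate functional, $\delta_n(x)=x_n$. *)

theory Defs
  imports "HOL-Analysis.Analysis" "HOL-Library.Function_Algebras"
begin

text \<open>omega = K^N, modelled as the type nat \<Rightarrow> K, which carries the product topology
  (instance in HOL-Analysis.Function_Topology).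
  The n-th coordinate functional delta_n is evaluation x n.\<close>

definition seq_scale :: "'a::field \<Rightarrow> (nat \<Rightarrow> 'a) \<Rightarrow> (nat \<Rightarrow> 'a)" where
  "seq_scale c x = (\<lambda>n. c * x n)"

lemma vector_space_seq_scale: "vector_space (seq_scale :: 'a::field \<Rightarrow> _)"
  by unfold_locales (auto simp: seq_scale_def fun_eq_iff algebra_simps)

end

theory Submission
  imports Defs
begin

(* Let E be a dense subspace of omega = K^N spanned by countably many vectors b_0, b_1, ...
   We construct v_n and alpha(n) by a recursion in which each step sees the whole history:
   v_n lies in E, v_n(alpha n) = 1 and v_n vanishes at alpha 0, ..., alpha (n - 1).
   Even steps n = 2m make sure that b_m lies in the span of v_0, ..., v_n (Gaussian
   elimination of b_m against the triangular system built so far); odd steps n = 2m + 1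
   make sure that m occurs among alpha 0, ..., alpha n.  Both are possible because density
   of E means that E realises every prescribed finite set of coordinates. *)

interpretation seq: vector_space "seq_scale :: 'a::field \<Rightarrow> (nat \<Rightarrow> 'a) \<Rightarrow> nat \<Rightarrow> 'a"
  by (rule vector_space_seq_scale)

lemma seq_scale_apply: "seq_scale c x i = c * x i"
  by (simp add: seq_scale_def)

lemma sum_apply: "(sum f A) i = (\<Sum>a\<in>A. f a i)"
  by (induction A rule: infinite_finite_induct) auto

lemma seq_subspace_coordinate_kernel: "seq.subspace {x :: nat \<Rightarrow> 'a::field. x i = 0}"
  by (simp add: seq.subspace_def seq_scale_apply)

section \<open>Dense subspaces realise finitely many coordinates\<close>

text \<open>If a dense subspace realises all values on the finite set F, then it contains a
  vector vanishing on F but not at a given further coordinate a: otherwise the coordinate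
  a would be a fixed linear combination of the coordinates in F on E, hence on its closure.\<close>

lemma dense_subspace_separates_coordinate:
  fixes E :: "(nat \<Rightarrow> 'a::real_normed_field) set"
  assumes sub: "seq.subspace E" and dense: "closure E = UNIV"
    and F: "finite F" "a \<notin> F" and interp: "\<And>t. \<exists>e\<in>E. \<forall>i\<in>F. e i = t i"
  shows "\<exists>z\<in>E. (\<forall>i\<in>F. z i = 0) \<and> z a \<noteq> 0"
proof (rule ccontr)
  assume no_z: "\<not> ?thesis"
  have "\<exists>e\<in>E. \<forall>j\<in>F. e j = (if j = i then 1 else 0)" for i
    using interp[of "\<lambda>j. if j = i then 1 else 0"] by simp
  then obtain u where u: "\<And>i. u i \<in> E \<and> (\<forall>j\<in>F. u i j = (if j = i then 1 else 0))"
    by metis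
  define f where "f x = x a - (\<Sum>i\<in>F. x i * u i a)" for x :: "nat \<Rightarrow> 'a"
  have "E \<subseteq> {x. f x = 0}"
  proof
    fix x assume x: "x \<in> E"
    define y where "y = x - (\<Sum>i\<in>F. seq_scale (x i) (u i))"
    have y_apply: "y j = x j - (\<Sum>i\<in>F. x i * u i j)" for j
      by (simp add: y_def sum_apply seq_scale_apply)
    have "y \<in> E"
      unfolding y_def using u x
      by (intro seq.subspace_diff[OF sub] seq.subspace_sum[OF sub] seq.subspace_scale[OF sub]) auto
    moreover have "\<forall>j\<in>F. y j = 0"
    proof
      fix j assume j: "j \<in> F"
      have "(\<Sum>i\<in>F. x i * u i j) = (\<Sum>i\<in>F. if i = j then x j else 0)"
        by (rule sum.cong) (use u j in auto)
      then show "y j = 0" using j F by (simp add: y_apply)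
    qed
    ultimately have "y a = 0" using no_z by auto
    then show "x \<in> {x. f x = 0}" by (simp add: y_apply f_def)
  qed
  moreover have "continuous_on UNIV f"
    unfolding f_def by (intro continuous_intros) auto
  then have "closed {x. f x = 0}"
    by (intro closed_Collect_eq) auto
  ultimately have "closure E \<subseteq> {x. f x = 0}" by (rule closure_minimal)
  then have "f (\<lambda>j. if j = a then 1 else 0) = 0" using dense by auto
  moreover have "f (\<lambda>j. if j = a then 1 else 0) = 1"
    using F by (auto simp: f_def intro!: sum.neutral)
  ultimately show False by simp
qed

lemma dense_subspace_interpolates:
  fixes E :: "(nat \<Rightarrow> 'a::real_normed_field) set"
  assumes sub: "seq.subspace E" and dense: "closure E = UNIV" and F: "finite F"
  shows "\<exists>e\<in>E. \<forall>i\<in>F. e i = t i"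
  using F
proof (induction F arbitrary: t rule: finite_induct)
  case empty
  then show ?case using seq.subspace_0[OF sub] by auto
next
  case (insert a F)
  obtain e where e: "e \<in> E" "\<forall>i\<in>F. e i = t i" using insert.IH by blast
  obtain z where z: "z \<in> E" "\<forall>i\<in>F. z i = 0" "z a \<noteq> 0"
    using dense_subspace_separates_coordinate[OF sub dense insert.hyps insert.IH] by blast
  have "e + seq_scale ((t a - e a) / z a) z \<in> E"
    by (intro seq.subspace_add[OF sub] e seq.subspace_scale[OF sub] z)
  moreover have "\<forall>i\<in>insert a F. (e + seq_scale ((t a - e a) / z a) z) i = t i"
    using e z by (auto simp: seq_scale_apply)
  ultimately show ?case by blast
qed

lemma dense_subspace_bump:
  fixes E :: "(nat \<Rightarrow> 'a::real_normed_field) set"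
  assumes sub: "seq.subspace E" and dense: "closure E = UNIV" and "finite F" "i \<notin> F"
  shows "\<exists>w\<in>E. w i = 1 \<and> (\<forall>j\<in>F. w j = 0)"
  using dense_subspace_interpolates[OF sub dense, of "insert i F" "\<lambda>j. if j = i then 1 else 0"]
    assms(3,4) by force

section \<open>Triangular systems\<close>

definition triangular :: "nat \<Rightarrow> (nat \<Rightarrow> nat \<Rightarrow> 'a::field) \<Rightarrow> (nat \<Rightarrow> nat) \<Rightarrow> bool" where
  "triangular n v \<alpha> \<longleftrightarrow> (\<forall>k<n. v k (\<alpha> k) = 1 \<and> (\<forall>j<k. v k (\<alpha> j) = 0))"

lemma triangular_reduce:
  assumes "triangular n v \<alpha>"
  shows "\<exists>y. x - y \<in> seq.span (v ` {..<n}) \<and> (\<forall>k<n. y (\<alpha> k) = 0)"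
  using assms
proof (induction n)
  case 0
  show ?case by (intro exI[of _ x]) (simp only: diff_self seq.span_zero, simp)
next
  case (Suc n)
  then have tri: "triangular n v \<alpha>" and pivot: "v n (\<alpha> n) = 1" "\<forall>j<n. v n (\<alpha> j) = 0"
    by (auto simp: triangular_def)
  obtain y where y: "x - y \<in> seq.span (v ` {..<n})" "\<forall>k<n. y (\<alpha> k) = 0"
    using Suc.IH[OF tri] by blast
  define y' where "y' = y - seq_scale (y (\<alpha> n)) (v n)"
  have span_mono: "seq.span (v ` {..<n}) \<subseteq> seq.span (v ` {..<Suc n})"
    by (rule seq.span_mono) auto
  have "x - y' = (x - y) + seq_scale (y (\<alpha> n)) (v n)" by (simp add: y'_def)
  also have "\<dots> \<in> seq.span (v ` {..<Suc n})"
    using y(1) span_mono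
    by (intro seq.span_add seq.span_scale) (auto intro: seq.span_base)
  finally have "x - y' \<in> seq.span (v ` {..<Suc n})" .
  moreover have "\<forall>k<Suc n. y' (\<alpha> k) = 0"
    using y(2) pivot by (auto simp: y'_def less_Suc_eq seq_scale_apply)
  ultimately show ?case by blast
qed

text \<open>A triangular system is linearly independent: going down from the top, each v m
  is outside the span of the later vectors, which all vanish at the pivot alpha m.\<close>

lemma triangular_independent:
  assumes tri: "triangular n v \<alpha>"
  shows "seq.independent (v ` {..<n})"
proof -
  have "seq.independent (v ` {m..<n})" if "m \<le> n" for m
    using that
  proof (induction m rule: inc_induct)
    case base
    show ?case using seq.independent_empty by simp
  next
    case (step m)
    have "seq.span (v ` {Suc m..<n}) \<subseteq> {x. x (\<alpha> m) = 0}"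
      using tri by (intro seq.span_minimal seq_subspace_coordinate_kernel) (auto simp: triangular_def)
    moreover have "v m (\<alpha> m) = 1" using tri step.hyps by (simp add: triangular_def)
    ultimately have "v m \<notin> seq.span (v ` {Suc m..<n})" by auto
    moreover have "{m..<n} = insert m {Suc m..<n}"
      using step.hyps by auto
    ultimately show ?case using step.IH by (simp add: seq.independent_insertI)
  qed
  then show ?thesis by (simp add: lessThan_atLeast0)
qed

text \<open>An infinite triangular system is independent, as the directed union of its finite
  initial segments, and both its vectors and its pivots are pairwise distinct.\<close>

lemma triangular_infinite:
  fixes v :: "nat \<Rightarrow> nat \<Rightarrow> 'a::field" and \<alpha> :: "nat \<Rightarrow> nat"
  assumes one: "\<And>n. v n (\<alpha> n) = 1" and zero: "\<And>n k. k < n \<Longrightarrow> v n (\<alpha> k) = 0"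
  shows "seq.independent (range v)" and "inj v" and "inj \<alpha>"
proof -
  have "range v = (\<Union>n. v ` {..<n})"
    by (auto intro!: UN_I[of "Suc _"])
  moreover have "seq.independent (\<Union>n. v ` {..<n})"
  proof (rule seq.independent_Union_directed)
    fix c d assume "c \<in> range (\<lambda>n. v ` {..<n})" "d \<in> range (\<lambda>n. v ` {..<n})"
    then obtain n m where "c = v ` {..<n}" "d = v ` {..<m}" by blast
    then show "c \<subseteq> d \<or> d \<subseteq> c" by (cases "n \<le> m") (auto intro: image_mono)
  next
    show "seq.independent c" if "c \<in> range (\<lambda>n. v ` {..<n})" for c
      using that triangular_independent[of _ v \<alpha>] by (auto simp: triangular_def one zero)
  qed
  ultimately show "seq.independent (range v)" by simp
  have distinct: "n = m" if "v n = v m \<or> \<alpha> n = \<alpha> m" for n m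
  proof (rule ccontr)
    assume "n \<noteq> m"
    then have "v n (\<alpha> m) = 0 \<or> v m (\<alpha> n) = 0" using zero by (cases "n < m") auto
    then show False using that one[of n] one[of m] by auto
  qed
  show "inj v" "inj \<alpha>" by (auto intro: injI distinct)
qed

section \<open>Recursive choice with full history\<close>

lemma history_choice:
  assumes step: "\<And>n g. (\<forall>k<n. R (map g [0..<k]) (g k)) \<Longrightarrow> \<exists>x. R (map g [0..<n]) x"
  shows "\<exists>f. \<forall>n. R (map f [0..<n]) (f n)"
proof -
  define valid where "valid xs \<longleftrightarrow> (\<forall>k<length xs. R (take k xs) (xs ! k))" for xs
  have take_nth: "take k xs = map ((!) xs) [0..<k]" if "k \<le> length xs" for k and xs :: "'a list"
    using that by (intro nth_equalityI) auto
  have extend: "\<exists>ys. (length ys = Suc n \<and> valid ys) \<and> (\<exists>x. ys = xs @ [x])"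
    if "length xs = n \<and> valid xs" for xs n
  proof -
    have "\<forall>k<length xs. R (map ((!) xs) [0..<k]) (xs ! k)"
      using that by (simp add: valid_def take_nth)
    then obtain x where "R (map ((!) xs) [0..<length xs]) x" using step by blast
    then have "R xs x" by (simp add: map_nth)
    then have "valid (xs @ [x])"
      using that by (auto simp: valid_def nth_append less_Suc_eq)
    then show ?thesis using that by (intro exI[of _ "xs @ [x]"]) auto
  qed
  have "\<exists>h. \<forall>n. (length (h n) = n \<and> valid (h n)) \<and> (\<exists>x. h (Suc n) = h n @ [x])"
  proof (rule dependent_nat_choice)
    show "\<exists>xs. length xs = 0 \<and> valid xs" by (simp add: valid_def)
  qed (rule extend)
  then obtain h where h: "\<And>n. length (h n) = n \<and> valid (h n)" "\<And>n. \<exists>x. h (Suc n) = h n @ [x]"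
    by blast
  have prefix: "take m (h n) = h m" if "m \<le> n" for m n
    using that
  proof (induction n)
    case (Suc n)
    obtain x where "h (Suc n) = h n @ [x]" using h(2) by blast
    then show ?case using Suc h(1)[of n] by (cases "m = Suc n") (auto simp: le_Suc_eq h(1))
  qed (use h(1)[of 0] in simp)
  define f where "f n = h (Suc n) ! n" for n
  have history: "map f [0..<n] = h n" for n
  proof (rule nth_equalityI)
    fix k assume "k < length (map f [0..<n])"
    then have "k < n" by simp
    then have "h n ! k = take (Suc k) (h n) ! k" by simp
    with \<open>k < n\<close> show "map f [0..<n] ! k = h n ! k" by (simp add: prefix f_def)
  qed (simp add: h(1))
  have "R (take n (h (Suc n))) (h (Suc n) ! n)" for n
    using h(1)[of "Suc n"] by (simp add: valid_def)
  then show ?thesis by (intro exI[of _ f]) (simp add: history prefix f_def)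
qed

definition admissible_step ::
    "(nat \<Rightarrow> 'a::field) set \<Rightarrow> (nat \<Rightarrow> nat \<Rightarrow> 'a) \<Rightarrow> nat \<Rightarrow> (nat \<Rightarrow> 'a) set \<Rightarrow> nat set
      \<Rightarrow> (nat \<Rightarrow> 'a) \<Rightarrow> nat \<Rightarrow> bool" where
  "admissible_step E b n Vs As w i \<longleftrightarrow> w \<in> E \<and> w i = 1 \<and> (\<forall>j\<in>As. w j = 0)
     \<and> (even n \<longrightarrow> b (n div 2) \<in> seq.span (insert w Vs))
     \<and> (odd n \<longrightarrow> n div 2 \<in> insert i As)"

text \<open>Odd steps: any coordinate can be made a pivot of a new vector of E vanishing at the
  earlier pivots (take a fresh coordinate if it is a pivot already).\<close>

lemma new_pivot:
  fixes E :: "(nat \<Rightarrow> 'a::real_normed_field) set"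
  assumes sub: "seq.subspace E" and dense: "closure E = UNIV" and As: "finite As"
  shows "\<exists>w i. w \<in> E \<and> w i = 1 \<and> (\<forall>j\<in>As. w j = 0) \<and> m \<in> insert i As"
proof (cases "m \<in> As")
  case True
  obtain i where i: "i \<notin> As" using As infinite_UNIV_nat ex_new_if_finite by blast
  obtain w where "w \<in> E" "w i = 1" "\<forall>j\<in>As. w j = 0"
    using dense_subspace_bump[OF sub dense As i] by blast
  with True show ?thesis by blast
next
  case False
  obtain w where "w \<in> E" "w m = 1" "\<forall>j\<in>As. w j = 0"
    using dense_subspace_bump[OF sub dense As False] by blast
  then show ?thesis by blast
qed

text \<open>Even steps: a vector x of E is absorbed into the span by one new vector of E vanishing
  at the earlier pivots, namely the normalised result of eliminating x against the system
  (or an arbitrary such vector if x is already in the span).\<close>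

lemma absorb_vector:
  fixes E :: "(nat \<Rightarrow> 'a::real_normed_field) set"
  assumes sub: "seq.subspace E" and dense: "closure E = UNIV" and x: "x \<in> E"
    and tri: "triangular n V A" and VE: "V ` {..<n} \<subseteq> E"
  shows "\<exists>w i. w \<in> E \<and> w i = 1 \<and> (\<forall>j\<in>A ` {..<n}. w j = 0)
    \<and> x \<in> seq.span (insert w (V ` {..<n}))"
proof -
  obtain y where y: "x - y \<in> seq.span (V ` {..<n})" "\<forall>k<n. y (A k) = 0"
    using triangular_reduce[OF tri] by blast
  have span_insert: "seq.span (V ` {..<n}) \<subseteq> seq.span (insert w (V ` {..<n}))" for w
    by (rule seq.span_mono) auto
  show ?thesis
  proof (cases "y = 0")
    case True
    obtain i where "i \<notin> A ` {..<n}" using infinite_UNIV_nat ex_new_if_finite by blast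
    then obtain w where "w \<in> E" "w i = 1" "\<forall>j\<in>A ` {..<n}. w j = 0"
      using dense_subspace_bump[OF sub dense] by blast
    moreover have "x \<in> seq.span (insert w (V ` {..<n}))"
      using y(1) True span_insert by auto
    ultimately show ?thesis by blast
  next
    case False
    then obtain i where i: "y i \<noteq> 0" by (auto simp: fun_eq_iff)
    define w where "w = seq_scale (1 / y i) y"
    have "seq.span (V ` {..<n}) \<subseteq> E" using VE by (intro seq.span_minimal sub)
    then have "y \<in> E" using seq.subspace_diff[OF sub x, of "x - y"] y(1) by auto
    then have "w \<in> E" unfolding w_def by (rule seq.subspace_scale[OF sub])
    have "x = (x - y) + seq_scale (y i) w"
      using i by (simp add: w_def fun_eq_iff seq_scale_apply)
    also have "\<dots> \<in> seq.span (insert w (V ` {..<n}))"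
      using y(1) span_insert by (intro seq.span_add seq.span_scale) (auto intro: seq.span_base)
    finally show ?thesis
      using \<open>w \<in> E\<close> i y(2) by (intro exI[of _ w] exI[of _ i]) (auto simp: w_def seq_scale_apply)
  qed
qed

lemma admissible_step_exists:
  fixes E :: "(nat \<Rightarrow> 'a::real_normed_field) set"
  assumes sub: "seq.subspace E" and dense: "closure E = UNIV" and bE: "range b \<subseteq> E"
    and tri: "triangular n V A" and VE: "V ` {..<n} \<subseteq> E"
  shows "\<exists>w i. admissible_step E b n (V ` {..<n}) (A ` {..<n}) w i"
proof (cases "even n")
  case True
  then show ?thesis
    using absorb_vector[OF sub dense _ tri VE, of "b (n div 2)"] bE
    by (auto simp: admissible_step_def)
next
  case False
  then show ?thesis
    using new_pivot[OF sub dense, of "A ` {..<n}" "n div 2"]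
    by (auto simp: admissible_step_def)
qed

lemma admissible_sequence_exists:
  fixes E :: "(nat \<Rightarrow> 'a::real_normed_field) set"
  assumes sub: "seq.subspace E" and dense: "closure E = UNIV" and bE: "range b \<subseteq> E"
  shows "\<exists>v \<alpha>. \<forall>n. admissible_step E b n (v ` {..<n}) (\<alpha> ` {..<n}) (v n) (\<alpha> n)"
proof -
  define R where "R ps p \<longleftrightarrow> admissible_step E b (length ps) (fst ` set ps) (snd ` set ps) (fst p) (snd p)"
    for ps :: "((nat \<Rightarrow> 'a) \<times> nat) list" and p
  have "\<exists>f. \<forall>n. R (map f [0..<n]) (f n)"
  proof (rule history_choice)
    fix n and g :: "nat \<Rightarrow> (nat \<Rightarrow> 'a) \<times> nat"
    assume "\<forall>k<n. R (map g [0..<k]) (g k)"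
    then have "triangular n (fst \<circ> g) (snd \<circ> g)" "(fst \<circ> g) ` {..<n} \<subseteq> E"
      by (auto simp: R_def admissible_step_def triangular_def atLeast0LessThan)
    from admissible_step_exists[OF sub dense bE this] show "\<exists>p. R (map g [0..<n]) p"
      by (auto simp: R_def atLeast0LessThan image_comp)
  qed
  then obtain f where "\<And>n. R (map f [0..<n]) (f n)" by blast
  then show ?thesis
    by (intro exI[of _ "fst \<circ> f"] exI[of _ "snd \<circ> f"]) (simp add: R_def atLeast0LessThan image_comp)
qed

text \<open>Even steps of the construction make the v n span E, odd steps make alpha surjective.\<close>

theorem dense_subspace_triangular_basis:
  fixes E :: "(nat \<Rightarrow> 'a::real_normed_field) set"
  assumes sub: "seq.subspace E" and dense: "closure E = UNIV"
    and B: "countable B" "B \<noteq> {}" "seq.span B = E"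
  shows "\<exists>(v :: nat \<Rightarrow> nat \<Rightarrow> 'a) (\<alpha> :: nat \<Rightarrow> nat).
    inj v \<and> seq.independent (range v) \<and> seq.span (range v) = E
    \<and> bij \<alpha> \<and> (\<forall>n. v n (\<alpha> n) = 1) \<and> (\<forall>n k. k < n \<longrightarrow> v n (\<alpha> k) = 0)"
proof -
  define b where "b = from_nat_into B"
  have b: "seq.span (range b) = E" using B by (simp add: b_def range_from_nat_into)
  then have "range b \<subseteq> E" using seq.span_superset by blast
  then obtain v \<alpha> where step: "\<And>n. admissible_step E b n (v ` {..<n}) (\<alpha> ` {..<n}) (v n) (\<alpha> n)"
    using admissible_sequence_exists[OF sub dense] by blast
  have one: "v n (\<alpha> n) = 1" for n
    using step[of n] by (simp add: admissible_step_def)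
  have zero: "v n (\<alpha> k) = 0" if "k < n" for n k
    using step[of n] that by (simp add: admissible_step_def)
  have "seq.span (range v) \<subseteq> E"
    using step by (intro seq.span_minimal sub) (auto simp: admissible_step_def)
  moreover have "range b \<subseteq> seq.span (range v)"
  proof
    fix x assume "x \<in> range b"
    then obtain m where "x = b m" by blast
    moreover have "seq.span (insert (v (2*m)) (v ` {..<2*m})) \<subseteq> seq.span (range v)"
      by (rule seq.span_mono) auto
    ultimately show "x \<in> seq.span (range v)" using step[of "2*m"] by (auto simp: admissible_step_def)
  qed
  then have "E \<subseteq> seq.span (range v)"
    unfolding b[symmetric] by (intro seq.span_minimal seq.subspace_span)
  ultimately have span: "seq.span (range v) = E" by (rule subset_antisym)
  have "m \<in> range \<alpha>" for m
    using step[of "2*m+1"] by (auto simp: admissible_step_def)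
  then have "surj \<alpha>" by blast
  moreover note triangular_infinite[of v \<alpha>, OF one zero]
  ultimately show ?thesis
    using span one zero unfolding bij_def by blast
qed

text \<open>The statement for K = R and K = C; a Hamel basis of countably infinite size is in
  particular a countable nonempty spanning set.\<close>

theorem lemma3p5:
  shows
  "(\<forall>E :: (nat \<Rightarrow> real) set.
      module.subspace seq_scale E \<and> closure E = UNIV \<and>
      (\<exists>B. B \<subseteq> E \<and> \<not> module.dependent seq_scale B \<and> module.span seq_scale B = E
           \<and> countable B \<and> infinite B)
      \<longrightarrow> (\<exists>(v :: nat \<Rightarrow> nat \<Rightarrow> real) (\<alpha> :: nat \<Rightarrow> nat).
            inj v \<and> \<not> module.dependent seq_scale (range v) \<and> module.span seq_scale (range v) = E
            \<and> bij \<alpha> \<and> (\<forall>n. v n (\<alpha> n) = 1) \<and> (\<forall>n k. k < n \<longrightarrow> v n (\<alpha> k) = 0)))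
 \<and> (\<forall>E :: (nat \<Rightarrow> complex) set.
      module.subspace seq_scale E \<and> closure E = UNIV \<and>
      (\<exists>B. B \<subseteq> E \<and> \<not> module.dependent seq_scale B \<and> module.span seq_scale B = E
           \<and> countable B \<and> infinite B)
      \<longrightarrow> (\<exists>(v :: nat \<Rightarrow> nat \<Rightarrow> complex) (\<alpha> :: nat \<Rightarrow> nat).
            inj v \<and> \<not> module.dependent seq_scale (range v) \<and> module.span seq_scale (range v) = E
            \<and> bij \<alpha> \<and> (\<forall>n. v n (\<alpha> n) = 1) \<and> (\<forall>n k. k < n \<longrightarrow> v n (\<alpha> k) = 0)))"
  by (intro conjI allI impI; elim conjE exE; rule dense_subspace_triangular_basis)
    (auto dest: infinite_imp_nonempty)

end
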